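(* Fix $s\in\mathbb N$ with $s\ge2$, $q\in\mathbb N\cup\{0\}$, and indices $\alpha_1,\dots,\alpha_q\in\{1,\dots,s\}$ (not necessarily distinct). For $\eta\in\mathbb N$ with $\eta\ge s$ and distinct reals $w_1,\dots,w_s$, $$\sum_{\substack{x_1+\dots+x_s=\eta\\ x_1,\dots,x_s\ge 1}} x_{\alpha_1}\cdots x_{\alpha_q}\, w_1^{x_1}\cdots w_s^{x_s}=\frac{\sum_{l=1}^s w_l^{\eta+2-s}f_{l,\eta}(w_1,\dots,w_s)}{\left(\prod_{1\le i<j\le s}(w_i-w_j)\right)^{2^q}},$$ where each $f_{l,\eta}\in\mathbb R[\eta][w_1,\dots,w_s]$ is homogeneous in $w_1,\dots,w_s$ of degree $2^q\binom{s}{2}+s-2$, and its coefficients are polynomials in $\eta$ of degree at most $q$.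
   Context: The sum runs over integer tuples $(x_1,\dots,x_s)$. *)

theory Defs
  imports Complex_Main "HOL-Computational_Algebra.Polynomial"
begin

definition comp_tuples :: "nat \<Rightarrow> nat \<Rightarrow> (nat \<Rightarrow> nat) set" where
  "comp_tuples s eta = {x. (\<forall>i\<in>{1..s}. 1 \<le> x i) \<and> (\<forall>i. i \<notin> {1..s} \<longrightarrow> x i = 0)
                          \<and> (\<Sum>i=1..s. x i) = eta}"

definition monomial_exps :: "nat \<Rightarrow> nat \<Rightarrow> (nat \<Rightarrow> nat) set" where
  "monomial_exps s d = {m. (\<forall>i. i \<notin> {1..s} \<longrightarrow> m i = 0) \<and> (\<Sum>i=1..s. m i) = d}"

definition hom_poly_eval :: "nat \<Rightarrow> nat \<Rightarrow> ((nat \<Rightarrow> nat) \<Rightarrow> real poly) \<Rightarrow> real \<Rightarrow> (nat \<Rightarrow> real) \<Rightarrow> real" where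
  "hom_poly_eval s d c eta w = (\<Sum>m\<in>monomial_exps s d. poly (c m) eta * (\<Prod>i=1..s. w i ^ m i))"

end

theory Submission
  imports Defs
begin

(* Substituting x_i = 1 + y_i turns the plain sum over compositions (q = 0) into
   w_1 ... w_s h_(eta-s)(w), with h_n the complete homogeneous symmetric polynomial.
   Since h_n and divided differences of powers obey the same two-point recursion,
   h_(eta-s)(w) = sum_l w_l^(eta-1) / prod_(j ~= l) (w_l - w_j), and multiplying by the
   Vandermonde product V gives the case q = 0.

   Each factor x_a is produced by the Euler operator w_a d/dw_a, which multiplies every
   monomial by its exponent of w_a. Applied to N / V^(2^q) with N = sum_l w_l^(eta+2-s) f_l,
   the quotient rule gives a numerator of the same shape over V^(2^(q+1)); differentiating
   w_a^(eta+2-s) contributes the factor eta + 2 - s, which raises the degree in eta by one.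
   The representation may be differentiated in w_a because it holds for all injective w,
   hence on a neighbourhood of the point. *)

section \<open>Weak compositions and homogeneous polynomial functions\<close>

definition weak_comps :: "'a set \<Rightarrow> nat \<Rightarrow> ('a \<Rightarrow> nat) set" where
  "weak_comps S n = {x. (\<forall>i. i \<notin> S \<longrightarrow> x i = 0) \<and> (\<Sum>i\<in>S. x i) = n}"

lemma finite_weak_comps:
  assumes "finite S"
  shows "finite (weak_comps S n)"
proof (rule finite_subset)
  show "weak_comps S n \<subseteq> {x. \<forall>i. (i \<in> S \<longrightarrow> x i \<in> {0..n}) \<and> (i \<notin> S \<longrightarrow> x i = 0)}"
    using assms by (auto simp: weak_comps_def intro: member_le_sum)
  show "finite {x. \<forall>i. (i \<in> S \<longrightarrow> x i \<in> {0..n}) \<and> (i \<notin> S \<longrightarrow> x i = 0)}"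
    by (rule finite_set_of_finite_funs[OF assms finite_atLeastAtMost])
qed

lemma weak_comps_0:
  assumes "finite S"
  shows "weak_comps S 0 = {\<lambda>_. 0}"
  using assms by (auto simp: weak_comps_def fun_eq_iff)

lemma monomial_exps_eq_weak_comps: "monomial_exps s d = weak_comps {1..s} d"
  unfolding monomial_exps_def weak_comps_def ..

lemma finite_monomial_exps: "finite (monomial_exps s d)"
  by (simp add: monomial_exps_eq_weak_comps finite_weak_comps)

definition hom_poly_fun :: "nat \<Rightarrow> nat \<Rightarrow> nat \<Rightarrow> (real \<Rightarrow> (nat \<Rightarrow> real) \<Rightarrow> real) \<Rightarrow> bool" where
  "hom_poly_fun s d q F \<longleftrightarrow>
     (\<exists>c. (\<forall>m. degree (c m) \<le> q) \<and> (\<forall>\<eta> w. F \<eta> w = hom_poly_eval s d c \<eta> w))"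

lemma hom_poly_fun_degree_mono:
  "hom_poly_fun s d q F \<Longrightarrow> q \<le> q' \<Longrightarrow> hom_poly_fun s d q' F"
  unfolding hom_poly_fun_def by (meson order_trans)

lemma hom_poly_fun_cong:
  "hom_poly_fun s d q F \<Longrightarrow> (\<And>\<eta> w. G \<eta> w = F \<eta> w) \<Longrightarrow> hom_poly_fun s d q G"
  unfolding hom_poly_fun_def by auto

lemma hom_poly_fun_coeff: "hom_poly_fun s 0 (degree p) (\<lambda>\<eta> w. poly p \<eta>)"
  unfolding hom_poly_fun_def
  by (rule exI[of _ "\<lambda>m. if m = (\<lambda>_. 0) then p else 0"])
     (simp add: hom_poly_eval_def monomial_exps_eq_weak_comps weak_comps_0)

lemma hom_poly_fun_const: "hom_poly_fun s 0 0 (\<lambda>\<eta> w. r)"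
  using hom_poly_fun_coeff[of s "[:r:]"] by simp

lemma hom_poly_fun_var:
  assumes "i \<in> {1..s}"
  shows "hom_poly_fun s 1 0 (\<lambda>\<eta> w. w i)"
proof -
  define e where "e = (\<lambda>j::nat. if j = i then 1 else (0::nat))"
  have e: "e \<in> monomial_exps s 1"
    using assms by (auto simp: monomial_exps_def e_def)
  have mon_e: "(\<Prod>j=1..s. w j ^ e j) = w i" for w :: "nat \<Rightarrow> real"
    using assms by (simp add: e_def if_distrib prod.delta cong: if_cong)
  have "hom_poly_eval s 1 (\<lambda>m. if m = e then 1 else 0) \<eta> w = w i" for \<eta> w
  proof -
    have "hom_poly_eval s 1 (\<lambda>m. if m = e then 1 else 0) \<eta> w
        = (\<Sum>m\<in>monomial_exps s 1. if m = e then \<Prod>j=1..s. w j ^ m j else 0)"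
      unfolding hom_poly_eval_def by (rule sum.cong) auto
    also have "\<dots> = w i"
      using e finite_monomial_exps mon_e by simp
    finally show ?thesis .
  qed
  then show ?thesis
    unfolding hom_poly_fun_def by (intro exI[of _ "\<lambda>m. if m = e then 1 else 0"]) auto
qed

lemma hom_poly_fun_add:
  assumes "hom_poly_fun s d q F" "hom_poly_fun s d q G"
  shows "hom_poly_fun s d q (\<lambda>\<eta> w. F \<eta> w + G \<eta> w)"
proof -
  obtain c1 where "\<forall>m. degree (c1 m) \<le> q" "\<forall>\<eta> w. F \<eta> w = hom_poly_eval s d c1 \<eta> w"
    using assms(1) unfolding hom_poly_fun_def by blast
  moreover obtain c2 where "\<forall>m. degree (c2 m) \<le> q" "\<forall>\<eta> w. G \<eta> w = hom_poly_eval s d c2 \<eta> w"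
    using assms(2) unfolding hom_poly_fun_def by blast
  ultimately show ?thesis
    unfolding hom_poly_fun_def
    by (intro exI[of _ "\<lambda>m. c1 m + c2 m"])
       (auto simp: hom_poly_eval_def degree_add_le sum.distrib[symmetric] distrib_right)
qed

lemma hom_poly_fun_mult:
  assumes "hom_poly_fun s d1 q1 F" "hom_poly_fun s d2 q2 G"
  shows "hom_poly_fun s (d1 + d2) (q1 + q2) (\<lambda>\<eta> w. F \<eta> w * G \<eta> w)"
proof -
  obtain c1 where c1: "\<forall>m. degree (c1 m) \<le> q1" "\<forall>\<eta> w. F \<eta> w = hom_poly_eval s d1 c1 \<eta> w"
    using assms(1) unfolding hom_poly_fun_def by blast
  obtain c2 where c2: "\<forall>m. degree (c2 m) \<le> q2" "\<forall>\<eta> w. G \<eta> w = hom_poly_eval s d2 c2 \<eta> w"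
    using assms(2) unfolding hom_poly_fun_def by blast
  define P where "P = monomial_exps s d1 \<times> monomial_exps s d2"
  define plus_exps where "plus_exps = (\<lambda>(m1, m2) (i::nat). m1 i + m2 i :: nat)"
  define c where "c = (\<lambda>m. \<Sum>(m1, m2)\<in>{p \<in> P. plus_exps p = m}. c1 m1 * c2 m2)"
  have fin: "finite P"
    unfolding P_def using finite_monomial_exps by simp
  have plus_P: "plus_exps ` P \<subseteq> monomial_exps s (d1 + d2)"
    by (auto simp: P_def plus_exps_def monomial_exps_def sum.distrib)
  have "degree (c m) \<le> q1 + q2" for m
    unfolding c_def using fin c1(1) c2(1)
    by (intro degree_sum_le) (auto intro: order_trans[OF degree_mult_le] add_mono)
  moreover have "F \<eta> w * G \<eta> w = hom_poly_eval s (d1 + d2) c \<eta> w" for \<eta> w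
  proof -
    define h where "h = (\<lambda>(m1, m2). poly (c1 m1) \<eta> * poly (c2 m2) \<eta> * (\<Prod>i=1..s. w i ^ plus_exps (m1, m2) i))"
    have "F \<eta> w * G \<eta> w = (\<Sum>m1\<in>monomial_exps s d1. \<Sum>m2\<in>monomial_exps s d2. h (m1, m2))"
      using c1(2) c2(2)
      by (simp add: hom_poly_eval_def sum_product h_def plus_exps_def power_add prod.distrib mult_ac)
    also have "\<dots> = (\<Sum>m\<in>monomial_exps s (d1 + d2). sum h {p \<in> P. plus_exps p = m})"
      using sum.group[OF fin finite_monomial_exps plus_P, of h] by (simp add: P_def sum.cartesian_product)
    also have "\<dots> = hom_poly_eval s (d1 + d2) c \<eta> w"
      unfolding hom_poly_eval_def c_def h_def
      by (intro sum.cong refl) (auto simp: poly_sum sum_distrib_right split: prod.splits intro!: sum.cong)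
    finally show ?thesis .
  qed
  ultimately show ?thesis
    unfolding hom_poly_fun_def by blast
qed

lemma hom_poly_fun_prod:
  assumes "finite I" "\<And>i. i \<in> I \<Longrightarrow> hom_poly_fun s (d i) (q i) (F i)"
  shows "hom_poly_fun s (\<Sum>i\<in>I. d i) (\<Sum>i\<in>I. q i) (\<lambda>\<eta> w. \<Prod>i\<in>I. F i \<eta> w)"
  using assms
proof (induction I rule: finite_induct)
  case empty
  then show ?case using hom_poly_fun_const[of s 1] by simp
next
  case (insert i I)
  then show ?case using hom_poly_fun_mult[of s "d i" "q i" "F i"] by simp
qed

lemma hom_poly_fun_power:
  "hom_poly_fun s d q F \<Longrightarrow> hom_poly_fun s (n * d) (n * q) (\<lambda>\<eta> w. F \<eta> w ^ n)"
  using hom_poly_fun_prod[of "{..<n}" s "\<lambda>_. d" "\<lambda>_. q" "\<lambda>_. F"] by simp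

lemma hom_poly_fun_diff:
  assumes "hom_poly_fun s d q F" "hom_poly_fun s d q G"
  shows "hom_poly_fun s d q (\<lambda>\<eta> w. F \<eta> w - G \<eta> w)"
proof -
  have "hom_poly_fun s d q (\<lambda>\<eta> w. (-1) * G \<eta> w)"
    using hom_poly_fun_mult[OF hom_poly_fun_const[of s "-1"] assms(2)] by simp
  then have "hom_poly_fun s d q (\<lambda>\<eta> w. F \<eta> w + (-1) * G \<eta> w)"
    by (rule hom_poly_fun_add[OF assms(1)])
  then show ?thesis
    by (rule hom_poly_fun_cong) simp
qed

section \<open>The Euler operator\<close>

definition has_euler_deriv :: "(real \<Rightarrow> real) \<Rightarrow> real \<Rightarrow> real \<Rightarrow> bool" where
  "has_euler_deriv f V t \<longleftrightarrow> (\<exists>D. (f has_field_derivative D) (at t) \<and> t * D = V)"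

lemma has_euler_deriv_const: "has_euler_deriv (\<lambda>x. c) 0 t"
  unfolding has_euler_deriv_def by (auto intro!: exI[of _ 0] derivative_eq_intros)

lemma has_euler_deriv_power_id: "has_euler_deriv (\<lambda>x. x ^ n) (of_nat n * t ^ n) t"
  unfolding has_euler_deriv_def
proof (intro exI conjI)
  show "((\<lambda>x. x ^ n) has_field_derivative of_nat n * t ^ (n - 1)) (at t)"
    using DERIV_pow[of n t UNIV] by simp
  show "t * (of_nat n * t ^ (n - 1)) = of_nat n * t ^ n"
    by (cases n) auto
qed

lemma has_euler_deriv_add:
  "has_euler_deriv f A t \<Longrightarrow> has_euler_deriv g B t \<Longrightarrow> has_euler_deriv (\<lambda>x. f x + g x) (A + B) t"
  unfolding has_euler_deriv_def by (auto intro!: derivative_eq_intros simp: distrib_left)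

lemma has_euler_deriv_mult:
  "has_euler_deriv f A t \<Longrightarrow> has_euler_deriv g B t \<Longrightarrow>
   has_euler_deriv (\<lambda>x. f x * g x) (A * g t + f t * B) t"
  unfolding has_euler_deriv_def by (auto intro!: derivative_eq_intros simp: algebra_simps)

lemma has_euler_deriv_sum:
  assumes "finite I" "\<And>i. i \<in> I \<Longrightarrow> has_euler_deriv (f i) (A i) t"
  shows "has_euler_deriv (\<lambda>x. \<Sum>i\<in>I. f i x) (\<Sum>i\<in>I. A i) t"
  using assms
proof (induction I rule: finite_induct)
  case empty
  then show ?case using has_euler_deriv_const[of 0 t] by simp
next
  case (insert i I)
  then show ?case using has_euler_deriv_add[of "f i" "A i" t] by simp
qed

lemma has_euler_deriv_power:
  "has_euler_deriv f A t \<Longrightarrow> has_euler_deriv (\<lambda>x. f x ^ n) (of_nat n * f t ^ (n - 1) * A) t"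
  unfolding has_euler_deriv_def by (auto intro!: derivative_eq_intros simp: algebra_simps)

lemma has_euler_deriv_divide:
  "has_euler_deriv f A t \<Longrightarrow> has_euler_deriv g B t \<Longrightarrow> g t \<noteq> 0 \<Longrightarrow>
   has_euler_deriv (\<lambda>x. f x / g x) ((A * g t - f t * B) / (g t * g t)) t"
  unfolding has_euler_deriv_def
  by (auto intro!: derivative_eq_intros simp: algebra_simps diff_divide_distrib)

lemma has_euler_deriv_quotient_power:
  assumes "has_euler_deriv f A t" "has_euler_deriv g B t" "g t \<noteq> 0"
  shows "has_euler_deriv (\<lambda>x. f x / g x ^ K)
           ((A * g t ^ K - of_nat K * f t * g t ^ (K - 1) * B) / g t ^ (2 * K)) t"
  unfolding mult_2 power_add
  using has_euler_deriv_divide[OF assms(1) has_euler_deriv_power[OF assms(2), of K]] assms(3)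
  by (simp add: mult_ac)

lemma has_euler_deriv_unique:
  assumes "has_euler_deriv f A t" "has_euler_deriv g B t" "eventually (\<lambda>x. f x = g x) (nhds t)"
  shows "A = B"
proof -
  obtain D where D: "(f has_field_derivative D) (at t)" "t * D = A"
    using assms(1) unfolding has_euler_deriv_def by blast
  obtain E where E: "(g has_field_derivative E) (at t)" "t * E = B"
    using assms(2) unfolding has_euler_deriv_def by blast
  have "(g has_field_derivative D) (at t)"
    using D(1) DERIV_cong_ev[OF refl assms(3) refl] by simp
  with E have "D = E" using DERIV_unique by blast
  with D E show ?thesis by simp
qed

lemma eventually_inj_on_fun_upd:
  fixes w :: "'a \<Rightarrow> 'b::t1_space"
  assumes "finite S" "inj_on w S" "a \<in> S"
  shows "eventually (\<lambda>t. inj_on (w(a := t)) S) (nhds (w a))"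
proof -
  have "open (- w ` (S - {a}))"
    using assms(1) by (intro open_Compl finite_imp_closed) auto
  moreover have "w a \<in> - w ` (S - {a})"
    using assms by (auto dest: inj_onD)
  ultimately have "eventually (\<lambda>t. t \<notin> w ` (S - {a})) (nhds (w a))"
    using eventually_nhds_in_open by fastforce
  then show ?thesis
  proof (rule eventually_mono)
    fix t assume "t \<notin> w ` (S - {a})"
    then show "inj_on (w(a := t)) S"
      using assms(2,3) inj_on_insert[of "w(a := t)" a "S - {a}"]
      by (simp add: insert_absorb inj_on_fun_updI inj_on_subset)
  qed
qed

lemma has_euler_deriv_monomial_sum:
  fixes w :: "nat \<Rightarrow> real" and k :: "(nat \<Rightarrow> nat) \<Rightarrow> real"
  assumes "finite M" "a \<in> {1..s}"
  shows "has_euler_deriv (\<lambda>t. \<Sum>m\<in>M. k m * (\<Prod>i=1..s. (w(a := t)) i ^ m i))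
           (\<Sum>m\<in>M. k m * real (m a) * (\<Prod>i=1..s. (w(a := t)) i ^ m i)) t"
proof -
  have split: "(\<Prod>i=1..s. (w(a := x)) i ^ m i) = x ^ m a * (\<Prod>i\<in>{1..s}-{a}. w i ^ m i)" for x m
    using assms(2) by (simp add: prod.remove[of _ a])
  have "has_euler_deriv (\<lambda>x. k m * (x ^ m a * R)) (k m * real (m a) * (t ^ m a * R)) t" for m R
  proof -
    have "has_euler_deriv (\<lambda>x. k m * (x ^ m a * R))
            (0 * (t ^ m a * R) + k m * (of_nat (m a) * t ^ m a * R + t ^ m a * 0)) t"
      by (intro has_euler_deriv_mult has_euler_deriv_const has_euler_deriv_power_id)
    then show ?thesis by (simp add: mult.assoc)
  qed
  then show ?thesis
    unfolding split by (intro has_euler_deriv_sum[OF assms(1)])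
qed

lemma has_euler_deriv_fun_upd_power_mult:
  assumes "has_euler_deriv (\<lambda>t. f (w(a := t))) (g w) (w a)"
  shows "has_euler_deriv (\<lambda>t. (w(a := t)) l ^ e * f (w(a := t)))
           ((if l = a then of_nat e else 0) * w l ^ e * f w + w l ^ e * g w) (w a)"
proof (cases "l = a")
  case True
  then show ?thesis
    using has_euler_deriv_mult[OF has_euler_deriv_power_id assms, of e] by simp
next
  case False
  then show ?thesis
    using has_euler_deriv_mult[OF has_euler_deriv_const assms, of "w l ^ e"] by simp
qed

lemma has_euler_deriv_power_sum_quotient:
  fixes w :: "nat \<Rightarrow> real"
  assumes F: "\<And>l. l \<in> {1..s} \<Longrightarrow> has_euler_deriv (\<lambda>t. F l (w(a := t))) (G l w) (w a)"
    and D: "has_euler_deriv (\<lambda>t. D (w(a := t))) D' (w a)" "D w \<noteq> 0"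
  shows "has_euler_deriv (\<lambda>t. (\<Sum>l=1..s. (w(a := t)) l ^ e * F l (w(a := t))) / D (w(a := t)) ^ K)
           ((\<Sum>l=1..s. w l ^ e * (((if l = a then of_nat e else 0) * F l w + G l w) * D w ^ K
                                  - of_nat K * F l w * D w ^ (K - 1) * D')) / D w ^ (2 * K)) (w a)"
proof -
  define N where "N t = (\<Sum>l=1..s. (w(a := t)) l ^ e * F l (w(a := t)))" for t
  define N' where "N' = (\<Sum>l=1..s. (if l = a then of_nat e else 0) * w l ^ e * F l w + w l ^ e * G l w)"
  have "has_euler_deriv N N' (w a)"
    unfolding N_def N'_def
    by (intro has_euler_deriv_sum finite_atLeastAtMost has_euler_deriv_fun_upd_power_mult F)
  moreover have "D (w(a := w a)) \<noteq> 0"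
    using D(2) by simp
  ultimately have "has_euler_deriv (\<lambda>t. N t / D (w(a := t)) ^ K)
      ((N' * D w ^ K - of_nat K * N (w a) * D w ^ (K - 1) * D') / D w ^ (2 * K)) (w a)"
    using has_euler_deriv_quotient_power[OF _ D(1)] by simp
  moreover have "N' * D w ^ K - of_nat K * N (w a) * D w ^ (K - 1) * D'
      = (\<Sum>l=1..s. w l ^ e * (((if l = a then of_nat e else 0) * F l w + G l w) * D w ^ K
                              - of_nat K * F l w * D w ^ (K - 1) * D'))"
    by (simp add: N_def N'_def sum_distrib_left sum_distrib_right sum_subtractf[symmetric] algebra_simps)
  ultimately show ?thesis
    unfolding N_def by simp
qed

lemma hom_poly_fun_euler:
  assumes "a \<in> {1..s}" "hom_poly_fun s d q F"
  obtains G where "hom_poly_fun s d q G"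
    and "\<And>\<eta> w t. has_euler_deriv (\<lambda>t. F \<eta> (w(a := t))) (G \<eta> (w(a := t))) t"
proof -
  obtain c where c: "\<forall>m. degree (c m) \<le> q" "\<forall>\<eta> w. F \<eta> w = hom_poly_eval s d c \<eta> w"
    using assms(2) unfolding hom_poly_fun_def by blast
  define c' where "c' m = smult (real (m a)) (c m)" for m
  have "hom_poly_fun s d q (hom_poly_eval s d c')"
    unfolding hom_poly_fun_def using c(1)
    by (intro exI[of _ c'] conjI allI) (auto simp: c'_def intro: order_trans[OF degree_smult_le])
  moreover have "has_euler_deriv (\<lambda>t. F \<eta> (w(a := t))) (hom_poly_eval s d c' \<eta> (w(a := t))) t" for \<eta> w t
    using has_euler_deriv_monomial_sum[OF finite_monomial_exps assms(1), where k = "\<lambda>m. poly (c m) \<eta>" and w = w and t = t]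
    by (simp add: c(2) hom_poly_eval_def c'_def mult_ac)
  ultimately show ?thesis using that by blast
qed

section \<open>Complete homogeneous polynomials as divided differences\<close>

definition complete_hom :: "'a set \<Rightarrow> nat \<Rightarrow> ('a \<Rightarrow> 'b::comm_semiring_1) \<Rightarrow> 'b" where
  "complete_hom S n w = (\<Sum>x\<in>weak_comps S n. \<Prod>i\<in>S. w i ^ x i)"

lemma complete_hom_0: "finite S \<Longrightarrow> complete_hom S 0 w = 1"
  by (simp add: complete_hom_def weak_comps_0)

lemma complete_hom_empty_Suc: "complete_hom {} (Suc n) w = 0"
  by (simp add: complete_hom_def weak_comps_def)

lemma weak_comps_insert_Suc:
  assumes "finite U" "a \<notin> U"
  shows "weak_comps (insert a U) (Suc n)
       = weak_comps U (Suc n) \<union> (\<lambda>y. y(a := Suc (y a))) ` weak_comps (insert a U) n"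
proof (intro equalityI subsetI)
  fix x assume x: "x \<in> weak_comps (insert a U) (Suc n)"
  show "x \<in> weak_comps U (Suc n) \<union> (\<lambda>y. y(a := Suc (y a))) ` weak_comps (insert a U) n"
  proof (cases "x a = 0")
    case True
    then show ?thesis using x assms by (force simp: weak_comps_def)
  next
    case False
    have "(\<Sum>i\<in>U. (x(a := x a - 1)) i) = (\<Sum>i\<in>U. x i)"
      using assms(2) by (intro sum.cong) auto
    then have "x(a := x a - 1) \<in> weak_comps (insert a U) n"
      using x False assms by (auto simp: weak_comps_def)
    moreover have "x = (x(a := x a - 1))(a := Suc ((x(a := x a - 1)) a))"
      using False by auto
    ultimately show ?thesis by blast
  qed
next
  fix x assume "x \<in> weak_comps U (Suc n) \<union> (\<lambda>y. y(a := Suc (y a))) ` weak_comps (insert a U) n"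
  then consider "x \<in> weak_comps U (Suc n)"
    | y where "y \<in> weak_comps (insert a U) n" "x = y(a := Suc (y a))" by blast
  then show "x \<in> weak_comps (insert a U) (Suc n)"
  proof cases
    case 1
    then show ?thesis using assms by (auto simp: weak_comps_def)
  next
    case 2
    have "(\<Sum>i\<in>U. x i) = (\<Sum>i\<in>U. y i)"
      using 2 assms(2) by (intro sum.cong) auto
    then show ?thesis using 2 assms by (auto simp: weak_comps_def)
  qed
qed

lemma complete_hom_insert_Suc:
  assumes "finite U" "a \<notin> U"
  shows "complete_hom (insert a U) (Suc n) w = complete_hom U (Suc n) w + w a * complete_hom (insert a U) n w"
proof -
  let ?bump = "\<lambda>y. y(a := Suc (y a))"
  let ?mon = "\<lambda>x. \<Prod>i\<in>insert a U. w i ^ x i"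
  have inj: "inj_on ?bump (weak_comps (insert a U) n)"
    by (rule inj_onI) (metis fun_upd_apply fun_upd_triv fun_upd_upd nat.inject)
  have disj: "weak_comps U (Suc n) \<inter> ?bump ` weak_comps (insert a U) n = {}"
    using assms(2) by (auto simp: weak_comps_def)
  have "sum ?mon (weak_comps U (Suc n)) = complete_hom U (Suc n) w"
    unfolding complete_hom_def using assms by (intro sum.cong) (auto simp: weak_comps_def)
  moreover have "?mon (?bump y) = w a * ?mon y" for y
  proof -
    have "(\<Prod>i\<in>U. w i ^ ?bump y i) = (\<Prod>i\<in>U. w i ^ y i)"
      using assms(2) by (intro prod.cong) auto
    then show ?thesis using assms by (simp add: mult.assoc)
  qed
  then have "sum ?mon (?bump ` weak_comps (insert a U) n) = w a * complete_hom (insert a U) n w"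
    by (simp add: sum.reindex[OF inj] complete_hom_def sum_distrib_left)
  ultimately show ?thesis
    unfolding complete_hom_def[of "insert a U" "Suc n"] weak_comps_insert_Suc[OF assms]
    using assms(1) by (simp add: sum.union_disjoint finite_weak_comps disj)
qed

lemma complete_hom_singleton: "complete_hom {a} n w = w a ^ n"
  by (induction n) (simp_all add: complete_hom_0 complete_hom_empty_Suc
      complete_hom_insert_Suc[of "{}", simplified])

lemma complete_hom_remove_diff:
  fixes w :: "'a \<Rightarrow> 'b::comm_ring_1"
  assumes "finite S" "a \<in> S" "b \<in> S"
  shows "(w b - w a) * complete_hom S n w
       = complete_hom (S - {a}) (Suc n) w - complete_hom (S - {b}) (Suc n) w"
proof -
  have "complete_hom (S - {c}) (Suc n) w = complete_hom S (Suc n) w - w c * complete_hom S n w"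
    if "c \<in> S" for c
    using complete_hom_insert_Suc[of "S - {c}" c n w] assms(1) that by (simp add: insert_absorb)
  then show ?thesis
    using assms(2,3) by (simp add: algebra_simps)
qed

definition divdiff_power :: "'a set \<Rightarrow> nat \<Rightarrow> ('a \<Rightarrow> 'b::field) \<Rightarrow> 'b" where
  "divdiff_power S k w = (\<Sum>l\<in>S. w l ^ k / (\<Prod>j\<in>S - {l}. w l - w j))"

lemma divdiff_power_insert_Suc:
  assumes "finite U" "a \<notin> U" "inj_on w (insert a U)"
  shows "divdiff_power (insert a U) (Suc k) w - w a * divdiff_power (insert a U) k w = divdiff_power U k w"
proof -
  have "insert a U - {l} = insert a (U - {l})" if "l \<in> U" for l
    using that assms(2) by auto
  then have expand: "divdiff_power (insert a U) j w = w a ^ j / (\<Prod>i\<in>U. w a - w i)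
      + (\<Sum>l\<in>U. w l ^ j / ((w l - w a) * (\<Prod>i\<in>U - {l}. w l - w i)))" for j
    unfolding divdiff_power_def using assms(1,2)
    by (simp add: insert_Diff_if cong: sum.cong)
  have cancel: "w l ^ Suc k / ((w l - w a) * P) - w a * (w l ^ k / ((w l - w a) * P)) = w l ^ k / P"
    if "l \<in> U" for l P
  proof -
    have "w l - w a \<noteq> 0" using assms that by (auto simp: inj_on_def)
    moreover have "w l ^ Suc k / ((w l - w a) * P) - w a * (w l ^ k / ((w l - w a) * P))
        = (w l - w a) * w l ^ k / ((w l - w a) * P)"
      by (simp only: times_divide_eq_right diff_divide_distrib[symmetric] left_diff_distrib power_Suc)
    ultimately show ?thesis by simp
  qed
  have "divdiff_power (insert a U) (Suc k) w - w a * divdiff_power (insert a U) k w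
      = (\<Sum>l\<in>U. w l ^ Suc k / ((w l - w a) * (\<Prod>i\<in>U - {l}. w l - w i))
                 - w a * (w l ^ k / ((w l - w a) * (\<Prod>i\<in>U - {l}. w l - w i))))"
    unfolding expand by (simp add: sum_subtractf sum_distrib_left field_simps)
  also have "\<dots> = divdiff_power U k w"
    unfolding divdiff_power_def by (intro sum.cong refl cancel)
  finally show ?thesis .
qed

lemma divdiff_power_remove_diff:
  assumes "finite S" "a \<in> S" "b \<in> S" "inj_on w S"
  shows "(w b - w a) * divdiff_power S k w = divdiff_power (S - {a}) k w - divdiff_power (S - {b}) k w"
proof -
  have "divdiff_power (S - {c}) k w = divdiff_power S (Suc k) w - w c * divdiff_power S k w"
    if "c \<in> S" for c
    using divdiff_power_insert_Suc[of "S - {c}" c w k] assms(1,4) that by (simp add: insert_absorb)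
  then show ?thesis
    using assms(2,3) by (simp add: algebra_simps)
qed

lemma divdiff_power_eq_complete_hom_step:
  fixes w :: "'a \<Rightarrow> 'b::field"
  assumes "finite S" "inj_on w S" "a \<in> S" "b \<in> S" "a \<noteq> b"
    and remove: "\<And>c. c \<in> {a, b} \<Longrightarrow> divdiff_power (S - {c}) k w
                   = (if k + 2 < card S then 0 else complete_hom (S - {c}) (k + 2 - card S) w)"
  shows "divdiff_power S k w = (if k + 1 < card S then 0 else complete_hom S (k + 1 - card S) w)"
proof -
  have diff: "(w b - w a) * divdiff_power S k w
      = divdiff_power (S - {a}) k w - divdiff_power (S - {b}) k w"
    using divdiff_power_remove_diff[OF assms(1,3,4,2)] .
  have ne: "w b - w a \<noteq> 0"
    using assms(2-5) by (auto dest: inj_onD)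
  consider "k + 2 < card S" | "k + 2 = card S" | "card S \<le> k + 1"
    by linarith
  then show ?thesis
  proof cases
    case 1
    then have "(w b - w a) * divdiff_power S k w = 0"
      using diff remove by simp
    then show ?thesis using ne 1 by simp
  next
    case 2
    then have "(w b - w a) * divdiff_power S k w = 0"
      using diff remove assms(1) by (simp add: complete_hom_0)
    then show ?thesis using ne 2 by simp
  next
    case 3
    define n where "n = k + 1 - card S"
    have "k + 2 - card S = Suc n"
      using 3 unfolding n_def by linarith
    then have "(w b - w a) * divdiff_power S k w
        = complete_hom (S - {a}) (Suc n) w - complete_hom (S - {b}) (Suc n) w"
      using 3 diff remove by simp
    also have "\<dots> = (w b - w a) * complete_hom S n w"
      by (rule complete_hom_remove_diff[OF assms(1,3,4), symmetric])
    finally show ?thesis using ne 3 unfolding n_def by simp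
  qed
qed

lemma divdiff_power_eq_complete_hom:
  fixes w :: "'a \<Rightarrow> 'b::field"
  assumes "finite S" "inj_on w S"
  shows "divdiff_power S k w = (if k + 1 < card S then 0 else complete_hom S (k + 1 - card S) w)"
  using assms
proof (induction "card S" arbitrary: S k rule: less_induct)
  case less
  show ?case
  proof (cases "\<exists>a b. a \<in> S \<and> b \<in> S \<and> a \<noteq> b")
    case False
    then consider "S = {}" | a where "S = {a}" by blast
    then show ?thesis
      by cases (simp_all add: divdiff_power_def complete_hom_empty_Suc complete_hom_singleton)
  next
    case True
    then obtain a b where ab: "a \<in> S" "b \<in> S" "a \<noteq> b" by blast
    have "card {a, b} \<le> card S"
      using less.prems(1) ab by (intro card_mono) auto
    with ab have card: "card S \<ge> 2" by simp
    have "divdiff_power (S - {c}) k w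
        = (if k + 2 < card S then 0 else complete_hom (S - {c}) (k + 2 - card S) w)" if "c \<in> S" for c
    proof -
      have "card (S - {c}) = card S - 1"
        using less.prems(1) that by simp
      then have "card (S - {c}) < card S" "k + 1 < card (S - {c}) \<longleftrightarrow> k + 2 < card S"
          "k + 1 - card (S - {c}) = k + 2 - card S"
        using card by linarith+
      moreover have "inj_on w (S - {c})"
        using less.prems(2) by (rule inj_on_subset) auto
      ultimately show ?thesis
        using less.hyps[of "S - {c}" k] less.prems(1) by simp
    qed
    with ab show ?thesis
      by (intro divdiff_power_eq_complete_hom_step[OF less.prems]) auto
  qed
qed

section \<open>Vandermonde products\<close>

definition vandermonde :: "nat \<Rightarrow> (nat \<Rightarrow> 'a::comm_ring_1) \<Rightarrow> 'a" where
  "vandermonde s w = (\<Prod>i\<in>{1..s}. \<Prod>j\<in>{i<..s}. w i - w j)"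

definition vandermonde_cofactor :: "nat \<Rightarrow> nat \<Rightarrow> (nat \<Rightarrow> 'a::comm_ring_1) \<Rightarrow> 'a" where
  "vandermonde_cofactor s l w =
     (\<Prod>i\<in>{1..s}. \<Prod>j\<in>{i<..s}. if i = l then 1 else if j = l then -1 else w i - w j)"

lemma vandermonde_nonzero:
  fixes w :: "nat \<Rightarrow> 'a::idom"
  assumes "inj_on w {1..s}"
  shows "vandermonde s w \<noteq> 0"
proof -
  have "w i \<noteq> w j" if "i \<in> {1..s}" "j \<in> {i<..s}" for i j
    using assms that by (auto dest: inj_onD)
  then show ?thesis
    by (auto simp: vandermonde_def)
qed

lemma vandermonde_split:
  assumes l: "l \<in> {1..s}"
  shows "vandermonde s w = (\<Prod>j\<in>{1..s} - {l}. w l - w j) * vandermonde_cofactor s l w"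
proof -
  define k where "k i j = (if i = l then w l - w j else if j = l then w l - w i else 1)" for i j
  have "vandermonde s w = (\<Prod>i\<in>{1..s}. \<Prod>j\<in>{i<..s}.
          (if i = l then 1 else if j = l then -1 else w i - w j) * k i j)"
    unfolding vandermonde_def k_def by (intro prod.cong refl) auto
  also have "\<dots> = vandermonde_cofactor s l w * (\<Prod>i\<in>{1..s}. \<Prod>j\<in>{i<..s}. k i j)"
    unfolding vandermonde_cofactor_def by (simp add: prod.distrib)
  also have "(\<Prod>i\<in>{1..s}. \<Prod>j\<in>{i<..s}. k i j)
      = (\<Prod>i\<in>{1..s}. (if i = l then \<Prod>j\<in>{l<..s}. w l - w j else 1) * (if i < l then w l - w i else 1))"
  proof (rule prod.cong[OF refl])
    fix i assume i: "i \<in> {1..s}"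
    consider "i = l" | "i < l" | "l < i" by linarith
    then show "(\<Prod>j\<in>{i<..s}. k i j)
        = (if i = l then \<Prod>j\<in>{l<..s}. w l - w j else 1) * (if i < l then w l - w i else 1)"
    proof cases
      case 2
      then have "(\<Prod>j\<in>{i<..s}. k i j) = (\<Prod>j\<in>{i<..s}. if j = l then w l - w i else 1)"
        unfolding k_def by (intro prod.cong) auto
      then show ?thesis using 2 l by simp
    qed (auto simp: k_def)
  qed
  also have "\<dots> = (\<Prod>j\<in>{l<..s}. w l - w j) * (\<Prod>i\<in>{1..<l}. w l - w i)"
  proof -
    have "{1..s} \<inter> {i. i < l} = {1..<l}" using l by auto
    then show ?thesis using l by (simp add: prod.distrib prod.If_cases)
  qed
  also have "\<dots> = (\<Prod>j\<in>{1..s} - {l}. w l - w j)"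
  proof -
    have split: "{1..s} - {l} = {1..<l} \<union> {l<..s}" using l by auto
    have "(\<Prod>j\<in>{1..s} - {l}. w l - w j) = (\<Prod>j\<in>{1..<l}. w l - w j) * (\<Prod>j\<in>{l<..s}. w l - w j)"
      unfolding split by (rule prod.union_disjoint) auto
    then show ?thesis by (simp add: mult.commute)
  qed
  finally show ?thesis by (simp add: mult.commute)
qed

lemma card_pairs_eq_choose_2: "(\<Sum>i=1..s. \<Sum>j\<in>{i<..s}. 1::nat) = s choose 2"
proof (induction s)
  case (Suc s)
  have "(\<Sum>i=1..Suc s. \<Sum>j\<in>{i<..Suc s}. 1::nat) = (\<Sum>i=1..s. (\<Sum>j\<in>{i<..s}. 1) + 1)"
    by (simp add: sum.atLeast1_atMost_eq Suc_diff_le)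
  also have "\<dots> = (s choose 2) + s"
    by (subst sum.distrib) (simp only: Suc.IH, simp)
  finally show ?case by (simp add: numeral_2_eq_2)
qed simp

lemma card_pairs_avoiding:
  assumes "l \<in> {1..s}"
  shows "(\<Sum>i=1..s. \<Sum>j\<in>{i<..s}. if i = l \<or> j = l then 0 else 1::nat) + (s - 1) = s choose 2"
proof -
  have "(\<Sum>j\<in>{i<..s}. if i = l \<or> j = l then 1 else 0::nat) = (if i = l then s - l else if i < l then 1 else 0)"
    for i
  proof -
    consider "i = l" | "i < l" | "l < i" by linarith
    then show ?thesis
    proof cases
      case 2
      then have "(\<Sum>j\<in>{i<..s}. if i = l \<or> j = l then 1 else 0::nat) = (\<Sum>j\<in>{i<..s}. if j = l then 1 else 0)"
        by (intro sum.cong) auto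
      then show ?thesis using 2 assms by simp
    qed auto
  qed
  moreover have "(\<Sum>i=1..s. if i = l then s - l else if i < l then 1 else 0::nat) = s - 1"
  proof -
    have "{1..s} \<inter> {i. i < l} = {1..<l}" using assms by auto
    then have "(\<Sum>i=1..s. if i < l then 1 else 0::nat) = l - 1"
      by (simp add: sum.If_cases)
    moreover have "(\<Sum>i=1..s. if i = l then s - l else if i < l then 1 else 0::nat)
        = (\<Sum>i=1..s. if i = l then s - l else 0) + (\<Sum>i=1..s. if i < l then 1 else 0::nat)"
      by (subst sum.distrib[symmetric]) (rule sum.cong, auto)
    ultimately show ?thesis using assms by simp
  qed
  moreover have "(\<Sum>i=1..s. \<Sum>j\<in>{i<..s}. if i = l \<or> j = l then 0 else 1::nat)
      + (\<Sum>i=1..s. \<Sum>j\<in>{i<..s}. if i = l \<or> j = l then 1 else 0::nat) = s choose 2"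
    unfolding card_pairs_eq_choose_2[symmetric] sum.distrib[symmetric] by (intro sum.cong) auto
  ultimately show ?thesis by simp
qed

lemma hom_poly_fun_vandermonde: "hom_poly_fun s (s choose 2) 0 (\<lambda>\<eta> w. vandermonde s w)"
proof -
  have "hom_poly_fun s (\<Sum>i=1..s. \<Sum>j\<in>{i<..s}. 1) (\<Sum>i=1..s. \<Sum>j\<in>{i<..s}. 0)
          (\<lambda>\<eta> w. \<Prod>i\<in>{1..s}. \<Prod>j\<in>{i<..s}. w i - w j)"
    by (intro hom_poly_fun_prod hom_poly_fun_diff hom_poly_fun_var) auto
  then show ?thesis
    unfolding card_pairs_eq_choose_2 vandermonde_def by simp
qed

lemma hom_poly_fun_vandermonde_cofactor:
  assumes "l \<in> {1..s}"
  shows "hom_poly_fun s ((s choose 2) - (s - 1)) 0 (\<lambda>\<eta> w. vandermonde_cofactor s l w)"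
proof -
  have "hom_poly_fun s (if i = l \<or> j = l then 0 else 1) 0
          (\<lambda>\<eta> w. if i = l then 1 else if j = l then -1 else w i - w j)"
    if "i \<in> {1..s}" "j \<in> {i<..s}" for i j
    using that hom_poly_fun_const[of s 1] hom_poly_fun_const[of s "-1"]
      hom_poly_fun_diff[OF hom_poly_fun_var hom_poly_fun_var, of i s j]
    by auto
  then have "hom_poly_fun s (\<Sum>i=1..s. \<Sum>j\<in>{i<..s}. if i = l \<or> j = l then 0 else 1) (\<Sum>i=1..s. \<Sum>j\<in>{i<..s}. 0)
          (\<lambda>\<eta> w. vandermonde_cofactor s l w)"
    unfolding vandermonde_cofactor_def by (intro hom_poly_fun_prod) auto
  moreover have "(\<Sum>i=1..s. \<Sum>j\<in>{i<..s}. if i = l \<or> j = l then 0 else 1::nat) = (s choose 2) - (s - 1)"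
    using card_pairs_avoiding[OF assms] by linarith
  ultimately show ?thesis by simp
qed

section \<open>Sums over compositions\<close>

lemma bij_betw_weak_comps_comp_tuples:
  assumes "s \<le> \<eta>"
  shows "bij_betw (\<lambda>y i. if i \<in> {1..s} then Suc (y i) else 0) (weak_comps {1..s} (\<eta> - s)) (comp_tuples s \<eta>)"
proof (rule bij_betw_byWitness[where f' = "\<lambda>x i. if i \<in> {1..s} then x i - 1 else 0"])
  have sum_Suc: "(\<Sum>i=1..s. Suc (y i)) = (\<Sum>i=1..s. y i) + s" for y :: "nat \<Rightarrow> nat"
    unfolding Suc_eq_plus1 sum.distrib by simp
  show "\<forall>y\<in>weak_comps {1..s} (\<eta> - s). (\<lambda>i. if i \<in> {1..s} then (if i \<in> {1..s} then Suc (y i) else 0) - 1 else 0) = y"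
    by (auto simp: weak_comps_def fun_eq_iff)
  show "\<forall>x\<in>comp_tuples s \<eta>. (\<lambda>i. if i \<in> {1..s} then Suc (if i \<in> {1..s} then x i - 1 else 0) else 0) = x"
    by (force simp: comp_tuples_def fun_eq_iff)
  show "(\<lambda>y i. if i \<in> {1..s} then Suc (y i) else 0) ` weak_comps {1..s} (\<eta> - s) \<subseteq> comp_tuples s \<eta>"
  proof -
    have "(\<Sum>i=1..s. if i \<in> {1..s} then Suc (y i) else 0) = (\<Sum>i=1..s. y i) + s" for y
      unfolding sum_Suc[symmetric] by (rule sum.cong) auto
    then show ?thesis using assms by (auto simp: weak_comps_def comp_tuples_def)
  qed
  have "(\<Sum>i=1..s. if i \<in> {1..s} then x i - 1 else 0) = \<eta> - s" if "x \<in> comp_tuples s \<eta>" for x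
  proof -
    have "(\<Sum>i=1..s. x i) = (\<Sum>i=1..s. Suc (x i - 1))"
      using that by (intro sum.cong) (force simp: comp_tuples_def)+
    moreover have "(\<Sum>i=1..s. if i \<in> {1..s} then x i - 1 else 0) = (\<Sum>i=1..s. x i - 1)"
      by (rule sum.cong) auto
    ultimately show ?thesis using that sum_Suc[of "\<lambda>i. x i - 1"] by (simp add: comp_tuples_def)
  qed
  then show "(\<lambda>x i. if i \<in> {1..s} then x i - 1 else 0) ` comp_tuples s \<eta> \<subseteq> weak_comps {1..s} (\<eta> - s)"
    by (auto simp: weak_comps_def cong: sum.cong)
qed

lemma finite_comp_tuples: "finite (comp_tuples s \<eta>)"
proof (rule finite_subset)
  show "comp_tuples s \<eta> \<subseteq> weak_comps {1..s} \<eta>"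
    by (auto simp: comp_tuples_def weak_comps_def)
qed (simp add: finite_weak_comps)

lemma comp_tuples_sum_eq_complete_hom:
  fixes w :: "nat \<Rightarrow> 'a::comm_semiring_1"
  assumes "s \<le> \<eta>"
  shows "(\<Sum>x\<in>comp_tuples s \<eta>. \<Prod>i=1..s. w i ^ x i) = (\<Prod>i=1..s. w i) * complete_hom {1..s} (\<eta> - s) w"
proof -
  have "(\<Prod>i=1..s. w i ^ (if i \<in> {1..s} then Suc (y i) else 0)) = (\<Prod>i=1..s. w i) * (\<Prod>i=1..s. w i ^ y i)"
    for y :: "nat \<Rightarrow> nat"
  proof -
    have "(\<Prod>i=1..s. w i ^ (if i \<in> {1..s} then Suc (y i) else 0)) = (\<Prod>i=1..s. w i * w i ^ y i)"
      by (rule prod.cong) auto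
    then show ?thesis by (simp add: prod.distrib)
  qed
  then show ?thesis
    by (simp add: sum.reindex_bij_betw[OF bij_betw_weak_comps_comp_tuples[OF assms], symmetric]
        complete_hom_def sum_distrib_left)
qed

lemma comp_tuples_sum_mult_vandermonde:
  fixes w :: "nat \<Rightarrow> 'a::field"
  assumes "2 \<le> s" "s \<le> \<eta>" "inj_on w {1..s}"
  shows "(\<Sum>x\<in>comp_tuples s \<eta>. \<Prod>i=1..s. w i ^ x i) * vandermonde s w
       = (\<Sum>l=1..s. w l ^ (\<eta> + 2 - s) *
            (w l ^ (s - 2) * (\<Prod>i\<in>{1..s} - {l}. w i) * vandermonde_cofactor s l w))"
proof -
  have "complete_hom {1..s} (\<eta> - s) w = divdiff_power {1..s} (\<eta> - 1) w"
    using divdiff_power_eq_complete_hom[of "{1..s}" w "\<eta> - 1"] assms by simp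
  then have "(\<Sum>x\<in>comp_tuples s \<eta>. \<Prod>i=1..s. w i ^ x i) * vandermonde s w
      = (\<Sum>l=1..s. (\<Prod>i=1..s. w i) * (w l ^ (\<eta> - 1) / (\<Prod>j\<in>{1..s} - {l}. w l - w j)) * vandermonde s w)"
    unfolding comp_tuples_sum_eq_complete_hom[OF assms(2)] divdiff_power_def
    by (simp add: sum_distrib_left sum_distrib_right)
  also have "\<dots> = (\<Sum>l=1..s. w l ^ (\<eta> + 2 - s) *
      (w l ^ (s - 2) * (\<Prod>i\<in>{1..s} - {l}. w i) * vandermonde_cofactor s l w))"
  proof (rule sum.cong[OF refl])
    fix l assume l: "l \<in> {1..s}"
    have split: "vandermonde s w = (\<Prod>j\<in>{1..s} - {l}. w l - w j) * vandermonde_cofactor s l w"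
      by (rule vandermonde_split[OF l])
    then have "(\<Prod>j\<in>{1..s} - {l}. w l - w j) \<noteq> 0"
      using vandermonde_nonzero[OF assms(3)] by auto
    moreover have "(\<Prod>i=1..s. w i) = w l * (\<Prod>i\<in>{1..s} - {l}. w i)"
      using l by (simp add: prod.remove)
    moreover have "w l * w l ^ (\<eta> - 1) = w l ^ (\<eta> + 2 - s) * w l ^ (s - 2)"
      using assms(1,2) by (simp flip: power_Suc power_add)
    ultimately show "(\<Prod>i=1..s. w i) * (w l ^ (\<eta> - 1) / (\<Prod>j\<in>{1..s} - {l}. w l - w j)) * vandermonde s w
        = w l ^ (\<eta> + 2 - s) * (w l ^ (s - 2) * (\<Prod>i\<in>{1..s} - {l}. w i) * vandermonde_cofactor s l w)"
      unfolding split by (simp add: field_simps)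
  qed
  finally show ?thesis .
qed

lemma hom_poly_fun_base_numerator:
  assumes "2 \<le> s" "l \<in> {1..s}"
  shows "hom_poly_fun s ((s choose 2) + s - 2) 0
           (\<lambda>\<eta> w. w l ^ (s - 2) * (\<Prod>i\<in>{1..s} - {l}. w i) * vandermonde_cofactor s l w)"
proof -
  have "hom_poly_fun s ((s - 2) * 1 + (\<Sum>i\<in>{1..s} - {l}. 1) + ((s choose 2) - (s - 1)))
          ((s - 2) * 0 + (\<Sum>i\<in>{1..s} - {l}. 0) + 0)
          (\<lambda>\<eta> w. w l ^ (s - 2) * (\<Prod>i\<in>{1..s} - {l}. w i) * vandermonde_cofactor s l w)"
    using assms(2)
    by (intro hom_poly_fun_mult hom_poly_fun_power hom_poly_fun_var hom_poly_fun_prod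
        hom_poly_fun_vandermonde_cofactor) auto
  moreover have "s - 1 \<le> s choose 2"
    using card_pairs_avoiding[OF assms(2)] by linarith
  then have "(s - 2) * 1 + (\<Sum>i\<in>{1..s} - {l}. 1) + ((s choose 2) - (s - 1)) = (s choose 2) + s - 2"
    using assms by simp
  ultimately show ?thesis by simp
qed

definition comp_moment :: "nat \<Rightarrow> nat list \<Rightarrow> nat \<Rightarrow> (nat \<Rightarrow> real) \<Rightarrow> real" where
  "comp_moment s \<alpha> \<eta> w = (\<Sum>x\<in>comp_tuples s \<eta>. (\<Prod>a\<leftarrow>\<alpha>. real (x a)) * (\<Prod>i=1..s. w i ^ x i))"

lemma has_euler_deriv_comp_moment:
  assumes "a \<in> {1..s}"
  shows "has_euler_deriv (\<lambda>t. comp_moment s \<alpha> \<eta> (w(a := t))) (comp_moment s (a # \<alpha>) \<eta> w) (w a)"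
  using has_euler_deriv_monomial_sum[OF finite_comp_tuples assms,
      where k = "\<lambda>x. \<Prod>b\<leftarrow>\<alpha>. real (x b)" and w = w and t = "w a"]
  by (simp add: comp_moment_def mult_ac)

section \<open>The representation over a power of the Vandermonde product\<close>

definition vandermonde_rep :: "nat \<Rightarrow> nat \<Rightarrow> (nat \<Rightarrow> (nat \<Rightarrow> real) \<Rightarrow> real) \<Rightarrow> bool" where
  "vandermonde_rep s q \<Phi> \<longleftrightarrow>
     (\<exists>F. (\<forall>l\<in>{1..s}. hom_poly_fun s (2 ^ q * (s choose 2) + s - 2) q (F l)) \<and>
          (\<forall>\<eta> w. s \<le> \<eta> \<longrightarrow> inj_on w {1..s} \<longrightarrow>
             \<Phi> \<eta> w = (\<Sum>l=1..s. w l ^ (\<eta> + 2 - s) * F l (real \<eta>) w) / vandermonde s w ^ 2 ^ q))"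

lemma vandermonde_rep_comp_moment_Nil:
  assumes "2 \<le> s"
  shows "vandermonde_rep s 0 (comp_moment s [])"
  unfolding vandermonde_rep_def
proof (intro exI conjI ballI allI impI)
  fix l assume "l \<in> {1..s}"
  then show "hom_poly_fun s (2 ^ 0 * (s choose 2) + s - 2) 0
      (\<lambda>\<eta> w. w l ^ (s - 2) * (\<Prod>i\<in>{1..s} - {l}. w i) * vandermonde_cofactor s l w)"
    using hom_poly_fun_base_numerator[OF assms] by simp
next
  fix \<eta> :: nat and w :: "nat \<Rightarrow> real"
  assume \<eta>: "s \<le> \<eta>" and inj: "inj_on w {1..s}"
  show "comp_moment s [] \<eta> w = (\<Sum>l=1..s. w l ^ (\<eta> + 2 - s) *
      (w l ^ (s - 2) * (\<Prod>i\<in>{1..s} - {l}. w i) * vandermonde_cofactor s l w)) / vandermonde s w ^ 2 ^ 0"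
    using comp_tuples_sum_mult_vandermonde[OF assms \<eta> inj] vandermonde_nonzero[OF inj]
    by (simp add: comp_moment_def eq_divide_eq)
qed

lemma hom_poly_fun_euler_numerator:
  fixes s q C K :: nat
  defines "C \<equiv> s choose 2" and "K \<equiv> 2 ^ q"
  assumes "2 \<le> s" "degree p \<le> 1"
    and F: "hom_poly_fun s (K * C + s - 2) q F" and G: "hom_poly_fun s (K * C + s - 2) q G"
    and DG: "hom_poly_fun s C 0 DG"
  shows "hom_poly_fun s (2 * K * C + s - 2) (Suc q)
     (\<lambda>\<eta> w. (poly p \<eta> * F \<eta> w + G \<eta> w) * vandermonde s w ^ K
           - of_nat K * F \<eta> w * vandermonde s w ^ (K - 1) * DG \<eta> w)"
proof -
  define d where "d = K * C + s - 2"
  have V: "hom_poly_fun s (n * C) 0 (\<lambda>\<eta> w. vandermonde s w ^ n)" for n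
    using hom_poly_fun_power[OF hom_poly_fun_vandermonde, of s n] by (simp add: C_def)
  have "hom_poly_fun s (0 + d) (1 + q) (\<lambda>\<eta> w. poly p \<eta> * F \<eta> w)"
    using hom_poly_fun_mult[OF hom_poly_fun_degree_mono[OF hom_poly_fun_coeff assms(4)] F]
    by (simp add: d_def)
  then have "hom_poly_fun s d (Suc q) (\<lambda>\<eta> w. poly p \<eta> * F \<eta> w + G \<eta> w)"
    using hom_poly_fun_degree_mono[OF G[folded d_def], of "Suc q"] by (simp add: hom_poly_fun_add)
  from hom_poly_fun_mult[OF this V]
  have first: "hom_poly_fun s (d + K * C) (Suc q)
      (\<lambda>\<eta> w. (poly p \<eta> * F \<eta> w + G \<eta> w) * vandermonde s w ^ K)"
    by simp
  have "hom_poly_fun s (0 + d + (K - 1) * C + C) (0 + q + 0 + 0)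
      (\<lambda>\<eta> w. of_nat K * F \<eta> w * vandermonde s w ^ (K - 1) * DG \<eta> w)"
    using F[folded d_def] by (intro hom_poly_fun_mult hom_poly_fun_const V DG)
  moreover have "(K - 1) * C + C = K * C"
    unfolding K_def by (cases "(2::nat) ^ q") auto
  ultimately have second: "hom_poly_fun s (d + K * C) (Suc q)
      (\<lambda>\<eta> w. of_nat K * F \<eta> w * vandermonde s w ^ (K - 1) * DG \<eta> w)"
    by (auto intro: hom_poly_fun_degree_mono simp: add.assoc)
  have "d + K * C = 2 * K * C + s - 2"
    using assms(3) by (simp add: d_def)
  then show ?thesis
    using hom_poly_fun_diff[OF first second] by simp
qed

lemma vandermonde_rep_euler:
  assumes s: "2 \<le> s" and a: "a \<in> {1..s}" and rep: "vandermonde_rep s q \<Phi>"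
    and euler: "\<And>\<eta> w. s \<le> \<eta> \<Longrightarrow> inj_on w {1..s} \<Longrightarrow>
                  has_euler_deriv (\<lambda>t. \<Phi> \<eta> (w(a := t))) (\<Psi> \<eta> w) (w a)"
  shows "vandermonde_rep s (Suc q) \<Psi>"
proof -
  define C K where "C = s choose 2" and "K = (2::nat) ^ q"
  define d where "d = K * C + s - 2"
  obtain F where HF: "\<forall>l\<in>{1..s}. hom_poly_fun s d q (F l)"
    and \<Phi>: "\<And>\<eta> w. s \<le> \<eta> \<Longrightarrow> inj_on w {1..s} \<Longrightarrow>
               \<Phi> \<eta> w = (\<Sum>l=1..s. w l ^ (\<eta> + 2 - s) * F l (real \<eta>) w) / vandermonde s w ^ K"
    using rep unfolding vandermonde_rep_def d_def K_def C_def by blast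
  have "\<forall>l\<in>{1..s}. \<exists>G. hom_poly_fun s d q G \<and>
          (\<forall>\<eta> w t. has_euler_deriv (\<lambda>t. F l \<eta> (w(a := t))) (G \<eta> (w(a := t))) t)"
    using hom_poly_fun_euler[OF a] HF by metis
  then obtain G where HG: "\<forall>l\<in>{1..s}. hom_poly_fun s d q (G l)"
    and EG: "\<And>l \<eta> w t. l \<in> {1..s} \<Longrightarrow>
               has_euler_deriv (\<lambda>t. F l \<eta> (w(a := t))) (G l \<eta> (w(a := t))) t"
    by (metis (no_types))
  obtain DG where HDG: "hom_poly_fun s C 0 DG"
    and EDG: "\<And>\<eta> w t. has_euler_deriv (\<lambda>t. vandermonde s (w(a := t))) (DG \<eta> (w(a := t))) t"
    using hom_poly_fun_euler[OF a hom_poly_fun_vandermonde] unfolding C_def by metis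
  \<comment> \<open>\<open>poly (p a) \<eta> = \<eta> + 2 - s\<close> is the exponent of \<open>w a\<close> in the numerator\<close>
  define p where "p l = (if l = a then [:2 - real s, 1:] else 0)" for l
  define H where "H l \<eta> w = (poly (p l) \<eta> * F l \<eta> w + G l \<eta> w) * vandermonde s w ^ K
                    - of_nat K * F l \<eta> w * vandermonde s w ^ (K - 1) * DG \<eta> w" for l \<eta> w
  show ?thesis
    unfolding vandermonde_rep_def
  proof (intro exI[of _ H] conjI ballI allI impI)
    fix l assume "l \<in> {1..s}"
    moreover have "degree (p l) \<le> 1"
      by (simp add: p_def)
    ultimately show "hom_poly_fun s (2 ^ Suc q * (s choose 2) + s - 2) (Suc q) (H l)"
      using hom_poly_fun_euler_numerator[OF s, of "p l" q "F l" "G l" DG] HF HG HDG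
      unfolding H_def[abs_def] d_def K_def C_def by (simp add: mult.assoc)
  next
    fix \<eta> :: nat and w :: "nat \<Rightarrow> real"
    assume \<eta>: "s \<le> \<eta>" and inj: "inj_on w {1..s}"
    define e where "e = \<eta> + 2 - s"
    have EF: "has_euler_deriv (\<lambda>t. F l (real \<eta>) (w(a := t))) (G l (real \<eta>) w) (w a)"
      if "l \<in> {1..s}" for l
      using EG[OF that, where \<eta> = "real \<eta>" and w = w and t = "w a"] by simp
    have ED: "has_euler_deriv (\<lambda>t. vandermonde s (w(a := t))) (DG (real \<eta>) w) (w a)"
      using EDG[where \<eta> = "real \<eta>" and w = w and t = "w a"] by simp
    have "eventually (\<lambda>t. \<Phi> \<eta> (w(a := t))
        = (\<Sum>l=1..s. (w(a := t)) l ^ e * F l (real \<eta>) (w(a := t))) / vandermonde s (w(a := t)) ^ K) (nhds (w a))"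
      using eventually_inj_on_fun_upd[OF finite_atLeastAtMost inj a]
      by (rule eventually_mono) (simp add: \<Phi>[OF \<eta>] e_def)
    note has_euler_deriv_unique[OF euler[OF \<eta> inj]
        has_euler_deriv_power_sum_quotient[where F = "\<lambda>l. F l (real \<eta>)" and G = "\<lambda>l. G l (real \<eta>)",
          OF EF ED vandermonde_nonzero[OF inj]] this]
    moreover have "(if l = a then of_nat e else 0) = poly (p l) (real \<eta>)" for l
      using \<eta> by (simp add: p_def e_def of_nat_diff)
    ultimately show "\<Psi> \<eta> w = (\<Sum>l=1..s. w l ^ (\<eta> + 2 - s) * H l (real \<eta>) w) / vandermonde s w ^ 2 ^ Suc q"
      by (simp add: H_def e_def K_def)
  qed
qed

lemma vandermonde_rep_coeffs:
  assumes "vandermonde_rep s q \<Phi>"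
  shows "\<exists>c :: nat \<Rightarrow> (nat \<Rightarrow> nat) \<Rightarrow> real poly. (\<forall>l m. degree (c l m) \<le> q) \<and>
           (\<forall>\<eta> w. s \<le> \<eta> \<longrightarrow> inj_on w {1..s} \<longrightarrow>
              \<Phi> \<eta> w = (\<Sum>l=1..s. w l ^ (\<eta> + 2 - s) *
                 hom_poly_eval s (2 ^ q * (s choose 2) + s - 2) (c l) (real \<eta>) w) / vandermonde s w ^ 2 ^ q)"
proof -
  define d where "d = 2 ^ q * (s choose 2) + s - 2"
  obtain F where HF: "\<forall>l\<in>{1..s}. hom_poly_fun s d q (F l)"
    and \<Phi>: "\<forall>\<eta> w. s \<le> \<eta> \<longrightarrow> inj_on w {1..s} \<longrightarrow>
               \<Phi> \<eta> w = (\<Sum>l=1..s. w l ^ (\<eta> + 2 - s) * F l (real \<eta>) w) / vandermonde s w ^ 2 ^ q"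
    using assms unfolding vandermonde_rep_def d_def by blast
  have "\<exists>c. (\<forall>m. degree (c m) \<le> q) \<and> (l \<in> {1..s} \<longrightarrow> (\<forall>\<eta> w. F l \<eta> w = hom_poly_eval s d c \<eta> w))" for l
  proof (cases "l \<in> {1..s}")
    case True
    then show ?thesis using HF unfolding hom_poly_fun_def by blast
  qed (intro exI[of _ "\<lambda>_. 0"], auto)
  then obtain c where "\<forall>l. (\<forall>m. degree (c l m) \<le> q) \<and>
      (l \<in> {1..s} \<longrightarrow> (\<forall>\<eta> w. F l \<eta> w = hom_poly_eval s d (c l) \<eta> w))"
    by metis
  with \<Phi> show ?thesis
    unfolding d_def[symmetric] by (intro exI[of _ c]) (auto intro!: sum.cong)
qed

theorem lemmaA2:
  fixes s :: nat and \<alpha> :: "nat list"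
  assumes "s \<ge> 2" and "set \<alpha> \<subseteq> {1..s}"
  shows "\<exists>c :: nat \<Rightarrow> (nat \<Rightarrow> nat) \<Rightarrow> real poly.
     (\<forall>l m. degree (c l m) \<le> length \<alpha>) \<and>
     (\<forall>(\<eta>::nat) (w::nat \<Rightarrow> real). \<eta> \<ge> s \<longrightarrow> inj_on w {1..s} \<longrightarrow>
        (\<Sum>x\<in>comp_tuples s \<eta>. (\<Prod>a\<leftarrow>\<alpha>. real (x a)) * (\<Prod>i=1..s. w i ^ x i))
        = (\<Sum>l=1..s. w l ^ (\<eta> + 2 - s) *
              hom_poly_eval s (2 ^ length \<alpha> * (s choose 2) + s - 2) (c l) (real \<eta>) w)
          / (\<Prod>i\<in>{1..s}. \<Prod>j\<in>{i<..s}. w i - w j) ^ (2 ^ length \<alpha>))"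
proof -
  have "vandermonde_rep s (length \<alpha>) (comp_moment s \<alpha>)"
    using assms(2)
  proof (induction \<alpha>)
    case Nil
    show ?case using vandermonde_rep_comp_moment_Nil[OF assms(1)] by simp
  next
    case (Cons a \<alpha>)
    then show ?case
      using vandermonde_rep_euler[OF assms(1), of a _ "comp_moment s \<alpha>"] has_euler_deriv_comp_moment
      by simp
  qed
  then show ?thesis
    using vandermonde_rep_coeffs unfolding comp_moment_def vandermonde_def by blast
qed

end
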